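(* Let $(\Omega,\mathcal F)$ be a measurable space with $\Sigma\neq\emptyset$, $\nu$ a finite measure on it, and $\mu$ a finite measure with $\mu\ll\nu$. Let $F_\mu(y)=\nu(\{\omega:\frac{d\mu}{d\nu}(\omega)\le y\})$ ($y\ge0$), $v_\mu(A)=\int_0^\infty\min(\nu(\Omega)-F_\mu(z),\nu(A))\,dz$, $I_{\mu,y}=\{\omega:\frac{d\mu}{d\nu}(\omega)>y\}$, and $\mathcal I_\mu=\{\emptyset,\Omega\}\cup\{I_{\mu,y}\mid y\ge0\}$. Assume $\mathcal I_\mu\in\Sigma$ and that the image of $F_\mu$ contains the image of $\nu$ (i.e. $\{\nu(A):A\in\mathcal F\}\subset\{F_\mu(y):y\ge0\}$). Then for every non-negative measurable $f:\Omega\to[0,\infty)$ that is comonotone with $\frac{d\mu}{d\nu}$, $$v_\mu(f)=\int_\Omega f\,d\mu=\sup\Big\{\int_\Omega f\,d\mu'\ \Big|\ \mu'\text{ a finite measure},\ \mu'\ll\nu,\ F_{\mu'}=F_\mu\Big\},$$ where $v_\mu(f)=\int_0^\infty v_\mu(\{\omega:f(\omega)>z\})\,dz$.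
   Context: $\Sigma$ denotes the set of all classes $\mathcal I\subset\mathcal F$ that are chains (totally ordered by inclusion), contain $\emptyset$ and $\Omega$, and generate $\mathcal F$ as a $\sigma$-algebra. $\frac{d\mu}{d\nu}$ is the non-negative Radon–Nikodym derivative; $F_{\mu'}$ is defined from $\mu'$ like $F_\mu$. Two functions $f,g:\Omega\to\mathbb R$ are comonotone if the family $\{\{f\le z\}: z\in\mathbb R\}\cup\{\{g\le z\}:z\in\mathbb R\}$ is a chain under inclusion. *)

theory Defs
  imports "HOL-Probability.Probability"
begin

definition chain_classes :: "'a measure \<Rightarrow> 'a set set set" where
  "chain_classes M = {I. I \<subseteq> sets M \<and> (\<forall>A\<in>I. \<forall>B\<in>I. A \<subseteq> B \<or> B \<subseteq> A)
      \<and> {} \<in> I \<and> space M \<in> I \<and> sigma_sets (space M) I = sets M}"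

definition comonotone_on :: "'a set \<Rightarrow> ('a \<Rightarrow> real) \<Rightarrow> ('a \<Rightarrow> real) \<Rightarrow> bool" where
  "comonotone_on S f g =
     (let C = {{x\<in>S. f x \<le> z} | z. True} \<union> {{x\<in>S. g x \<le> z} | z. True}
      in \<forall>A\<in>C. \<forall>B\<in>C. A \<subseteq> B \<or> B \<subseteq> A)"

text \<open>F_mu(y) = nu({dmu/dnu <= y}) where h is (a version of) dmu/dnu.\<close>
definition distF :: "'a measure \<Rightarrow> ('a \<Rightarrow> ennreal) \<Rightarrow> real \<Rightarrow> real" where
  "distF M h y = measure M {x\<in>space M. h x \<le> ennreal y}"

definition vset :: "'a measure \<Rightarrow> ('a \<Rightarrow> ennreal) \<Rightarrow> 'a set \<Rightarrow> ennreal" where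
  "vset M h A = (\<integral>\<^sup>+ z\<in>{0..}. ennreal (min (measure M (space M) - distF M h z) (measure M A)) \<partial>lborel)"

definition vfun :: "'a measure \<Rightarrow> ('a \<Rightarrow> ennreal) \<Rightarrow> ('a \<Rightarrow> real) \<Rightarrow> ennreal" where
  "vfun M h f = (\<integral>\<^sup>+ z\<in>{0..}. vset M h {x\<in>space M. f x > z} \<partial>lborel)"

end

theory Submission imports Defs begin

text \<open>Let \<open>\<mu>' \<ll> \<nu>\<close> be finite with density \<open>h'\<close>. By the layer-cake formula,
  \<open>\<mu>'(A) = \<integral>\<^sub>0\<^sup>\<infinity> \<nu>(A \<inter> {h' > t}) dt\<close>, and the integrand is at most
  \<open>min (\<nu>(\<Omega>) - F\<^sub>\<mu>\<^sub>'(t)) \<nu>(A)\<close>, with equality when \<open>A\<close> is comparable with every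
  superlevel set of \<open>h'\<close>. Hence \<open>\<mu>'(A) \<le> v\<^sub>\<mu>\<^sub>'(A)\<close>, where \<open>v\<^sub>\<mu>\<^sub>'\<close> depends on \<open>\<mu>'\<close> only through \<open>F\<^sub>\<mu>\<^sub>'\<close>.
  Applying the layer-cake formula once more, now to \<open>f\<close>, gives
  \<open>\<integral> f d\<mu>' \<le> v\<^sub>\<mu>\<^sub>'(f) = v\<^sub>\<mu>(f)\<close> whenever \<open>F\<^sub>\<mu>\<^sub>' = F\<^sub>\<mu>\<close>, with equality for \<open>\<mu>' = \<mu>\<close>
  because comonotonicity makes every superlevel set of \<open>f\<close> comparable with those of
  \<open>d\<mu>/d\<nu>\<close>.\<close>

lemma emeasure_lborel_nonneg_less_ennreal:
  "emeasure lborel {t::real. 0 \<le> t \<and> ennreal t < e} = e"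
proof (cases e)
  case (real r)
  then have "{t::real. 0 \<le> t \<and> ennreal t < e} = {0..<r}"
    by (auto simp: ennreal_less_iff)
  then show ?thesis using real by simp
next
  case top
  then have "{t::real. 0 \<le> t \<and> ennreal t < e} = {0..}" by auto
  moreover have "emeasure lborel {0::real..} = \<infinity>"
  proof (rule ccontr)
    assume "emeasure lborel {0::real..} \<noteq> \<infinity>"
    then obtain r where r: "emeasure lborel {0::real..} = ennreal r" "0 \<le> r"
      by (cases "emeasure lborel {0::real..}") auto
    have "emeasure lborel {0::real..r+1} \<le> emeasure lborel {0::real..}"
      by (rule emeasure_mono) auto
    then show False using r by (simp add: ennreal_le_iff)
  qed
  ultimately show ?thesis using top by simp
qed

lemma nn_integral_layer_cake:
  assumes "sigma_finite_measure M" and [measurable]: "h \<in> borel_measurable M"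
  shows "(\<integral>\<^sup>+x. h x \<partial>M) = (\<integral>\<^sup>+t\<in>{0..}. emeasure M {x\<in>space M. ennreal t < h x} \<partial>lborel)"
proof -
  interpret pair_sigma_finite M lborel
    by (simp add: pair_sigma_finite.intro assms(1) lborel.sigma_finite_measure_axioms)
  let ?S = "\<lambda>x. {t::real. 0 \<le> t \<and> ennreal t < h x}"
  have "(\<integral>\<^sup>+x. h x \<partial>M) = (\<integral>\<^sup>+x. (\<integral>\<^sup>+t. indicator (?S x) t \<partial>lborel) \<partial>M)"
    by (simp add: emeasure_lborel_nonneg_less_ennreal)
  also have "\<dots> = (\<integral>\<^sup>+t. (\<integral>\<^sup>+x. indicator (?S x) t \<partial>M) \<partial>lborel)"
    by (rule Fubini'[symmetric]) (simp add: indicator_def)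
  also have "\<dots> = (\<integral>\<^sup>+t. indicator {0..} t * emeasure M {x\<in>space M. ennreal t < h x} \<partial>lborel)"
  proof (rule nn_integral_cong)
    fix t :: real
    have "(\<integral>\<^sup>+x. indicator (?S x) t \<partial>M)
        = (\<integral>\<^sup>+x. indicator {0..} t * indicator {x\<in>space M. ennreal t < h x} x \<partial>M)"
      by (rule nn_integral_cong) (auto simp: indicator_def)
    also have "\<dots> = indicator {0..} t * emeasure M {x\<in>space M. ennreal t < h x}"
      by (rule nn_integral_cmult_indicator) measurable
    finally show "(\<integral>\<^sup>+x. indicator (?S x) t \<partial>M)
        = indicator {0..} t * emeasure M {x\<in>space M. ennreal t < h x}" .
  qed
  finally show ?thesis by (simp add: mult.commute)
qed

lemma nn_integral_layer_cake_real:
  assumes "sigma_finite_measure M" and [measurable]: "f \<in> borel_measurable M"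
  shows "(\<integral>\<^sup>+x. ennreal (f x) \<partial>M) = (\<integral>\<^sup>+t\<in>{0..}. emeasure M {x\<in>space M. t < f x} \<partial>lborel)"
proof -
  have "(\<integral>\<^sup>+x. ennreal (f x) \<partial>M)
      = (\<integral>\<^sup>+t\<in>{0..}. emeasure M {x\<in>space M. ennreal t < ennreal (f x)} \<partial>lborel)"
    by (rule nn_integral_layer_cake[OF assms(1)]) measurable
  also have "\<dots> = (\<integral>\<^sup>+t\<in>{0..}. emeasure M {x\<in>space M. t < f x} \<partial>lborel)"
    by (rule set_nn_integral_cong) (auto simp: ennreal_less_iff)
  finally show ?thesis .
qed

lemma emeasure_density_layer_cake:
  assumes "sigma_finite_measure M" and [measurable]: "h \<in> borel_measurable M" "A \<in> sets M"
  shows "emeasure (density M h) A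
       = (\<integral>\<^sup>+t\<in>{0..}. emeasure M (A \<inter> {x\<in>space M. ennreal t < h x}) \<partial>lborel)"
proof -
  have "emeasure (density M h) A = (\<integral>\<^sup>+ x. h x * indicator A x \<partial>M)"
    by (rule emeasure_density) auto
  also have "\<dots> = (\<integral>\<^sup>+t\<in>{0..}. emeasure M {x\<in>space M. ennreal t < h x * indicator A x} \<partial>lborel)"
    by (rule nn_integral_layer_cake[OF assms(1)]) measurable
  also have "\<dots> = (\<integral>\<^sup>+t\<in>{0..}. emeasure M (A \<inter> {x\<in>space M. ennreal t < h x}) \<partial>lborel)"
    using sets.sets_into_space[OF assms(3)]
    by (intro set_nn_integral_cong arg_cong[where f = "emeasure M"]) (auto simp: indicator_def)
  finally show ?thesis .
qed

lemma distF_cong_AE: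
  assumes "AE x in M. h x = h' x"
    and [measurable]: "h \<in> borel_measurable M" "h' \<in> borel_measurable M"
  shows "distF M h y = distF M h' y"
  unfolding distF_def by (rule measure_eq_AE) (use assms(1) in auto)

lemma vfun_cong_distF:
  "(\<And>t. t \<ge> 0 \<Longrightarrow> distF M h t = distF M h' t) \<Longrightarrow> vfun M h f = vfun M h' f"
  unfolding vfun_def vset_def by (intro set_nn_integral_cong refl) auto

lemma comonotone_on_superlevel_nested:
  assumes "comonotone_on S f g"
  shows "{x\<in>S. z < f x} \<subseteq> {x\<in>S. t < g x} \<or> {x\<in>S. t < g x} \<subseteq> {x\<in>S. z < f x}"
proof -
  let ?C = "{{x\<in>S. f x \<le> z} | z. True} \<union> {{x\<in>S. g x \<le> z} | z. True}"
  have "\<forall>A\<in>?C. \<forall>B\<in>?C. A \<subseteq> B \<or> B \<subseteq> A"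
    using assms unfolding comonotone_on_def Let_def .
  moreover have "{x\<in>S. f x \<le> z} \<in> ?C" "{x\<in>S. g x \<le> t} \<in> ?C"
    by blast+
  ultimately have "{x\<in>S. f x \<le> z} \<subseteq> {x\<in>S. g x \<le> t} \<or> {x\<in>S. g x \<le> t} \<subseteq> {x\<in>S. f x \<le> z}"
    by (meson bspec)
  moreover have "{x\<in>S. z < f x} = S - {x\<in>S. f x \<le> z}" "{x\<in>S. t < g x} = S - {x\<in>S. g x \<le> t}"
    by auto
  ultimately show ?thesis by auto
qed

context finite_measure
begin

lemma measure_superlevel_eq_distF:
  assumes [measurable]: "h \<in> borel_measurable M"
  shows "measure M {x\<in>space M. ennreal t < h x} = measure M (space M) - distF M h t"
proof -
  have "{x\<in>space M. ennreal t < h x} = space M - {x\<in>space M. h x \<le> ennreal t}"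
    by auto
  then show ?thesis unfolding distF_def by (simp add: finite_measure_Diff)
qed

lemma emeasure_Int_superlevel_le:
  assumes [measurable]: "h \<in> borel_measurable M" "A \<in> sets M"
  shows "emeasure M (A \<inter> {x\<in>space M. ennreal t < h x})
       \<le> ennreal (min (measure M (space M) - distF M h t) (measure M A))"
proof -
  let ?S = "{x\<in>space M. ennreal t < h x}"
  have "measure M (A \<inter> ?S) \<le> measure M ?S" "measure M (A \<inter> ?S) \<le> measure M A"
    by (auto intro: finite_measure_mono)
  then show ?thesis
    by (simp add: emeasure_eq_measure measure_superlevel_eq_distF ennreal_leI)
qed

lemma emeasure_Int_superlevel_nested:
  assumes [measurable]: "h \<in> borel_measurable M" "A \<in> sets M"
    and nested: "A \<subseteq> {x\<in>space M. ennreal t < h x} \<or> {x\<in>space M. ennreal t < h x} \<subseteq> A"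
  shows "emeasure M (A \<inter> {x\<in>space M. ennreal t < h x})
       = ennreal (min (measure M (space M) - distF M h t) (measure M A))"
proof -
  let ?S = "{x\<in>space M. ennreal t < h x}"
  have "measure M (A \<inter> ?S) = min (measure M ?S) (measure M A)"
    using nested
  proof
    assume "A \<subseteq> ?S"
    then show ?thesis
      by (simp add: Int_absorb2 min_absorb2 finite_measure_mono)
  next
    assume "?S \<subseteq> A"
    then show ?thesis
      by (simp add: Int_absorb1 min_absorb1 finite_measure_mono)
  qed
  then show ?thesis
    by (simp add: emeasure_eq_measure measure_superlevel_eq_distF)
qed

lemma emeasure_density_le_vset:
  assumes [measurable]: "h \<in> borel_measurable M" "A \<in> sets M"
  shows "emeasure (density M h) A \<le> vset M h A"
  unfolding emeasure_density_layer_cake[OF sigma_finite_measure assms] vset_def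
  by (intro nn_integral_mono) (simp add: emeasure_Int_superlevel_le split: split_indicator)

lemma emeasure_density_eq_vset:
  assumes [measurable]: "h \<in> borel_measurable M" "A \<in> sets M"
    and "\<And>t. t \<ge> 0 \<Longrightarrow>
      A \<subseteq> {x\<in>space M. ennreal t < h x} \<or> {x\<in>space M. ennreal t < h x} \<subseteq> A"
  shows "emeasure (density M h) A = vset M h A"
  unfolding emeasure_density_layer_cake[OF sigma_finite_measure assms(1,2)] vset_def
  by (intro set_nn_integral_cong refl) (simp add: assms emeasure_Int_superlevel_nested)

lemma nn_integral_density_le_vfun:
  assumes "sigma_finite_measure (density M h)"
    and [measurable]: "h \<in> borel_measurable M" "f \<in> borel_measurable M"
  shows "(\<integral>\<^sup>+x. ennreal (f x) \<partial>density M h) \<le> vfun M h f"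
proof -
  have "(\<integral>\<^sup>+x. ennreal (f x) \<partial>density M h)
      = (\<integral>\<^sup>+z\<in>{0..}. emeasure (density M h) {x\<in>space M. z < f x} \<partial>lborel)"
    using nn_integral_layer_cake_real[OF assms(1), of f] by simp
  also have "\<dots> \<le> vfun M h f"
    unfolding vfun_def
    by (intro nn_integral_mono) (simp add: emeasure_density_le_vset split: split_indicator)
  finally show ?thesis .
qed

lemma nn_integral_density_eq_vfun:
  assumes "sigma_finite_measure (density M h)"
    and [measurable]: "h \<in> borel_measurable M" "f \<in> borel_measurable M"
    and "\<And>z t. t \<ge> 0 \<Longrightarrow> {x\<in>space M. z < f x} \<subseteq> {x\<in>space M. ennreal t < h x}
                        \<or> {x\<in>space M. ennreal t < h x} \<subseteq> {x\<in>space M. z < f x}"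
  shows "(\<integral>\<^sup>+x. ennreal (f x) \<partial>density M h) = vfun M h f"
proof -
  have "(\<integral>\<^sup>+x. ennreal (f x) \<partial>density M h)
      = (\<integral>\<^sup>+z\<in>{0..}. emeasure (density M h) {x\<in>space M. z < f x} \<partial>lborel)"
    using nn_integral_layer_cake_real[OF assms(1), of f] by simp
  also have "\<dots> = vfun M h f"
    unfolding vfun_def
    by (intro set_nn_integral_cong refl) (simp add: assms emeasure_density_eq_vset)
  finally show ?thesis .
qed

lemma nn_integral_density_eq_vfun_comonotone:
  assumes "sigma_finite_measure (density M (\<lambda>x. ennreal (g x)))"
    and [measurable]: "g \<in> borel_measurable M" "f \<in> borel_measurable M"
    and g_nonneg: "\<And>x. x \<in> space M \<Longrightarrow> g x \<ge> 0"
    and "comonotone_on (space M) f g"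
  shows "(\<integral>\<^sup>+x. ennreal (f x) \<partial>density M (\<lambda>x. ennreal (g x))) = vfun M (\<lambda>x. ennreal (g x)) f"
proof (rule nn_integral_density_eq_vfun[OF assms(1)])
  fix z t :: real assume "t \<ge> 0"
  then have "{x\<in>space M. ennreal t < ennreal (g x)} = {x\<in>space M. t < g x}"
    using g_nonneg by (auto simp: ennreal_less_iff)
  then show "{x\<in>space M. z < f x} \<subseteq> {x\<in>space M. ennreal t < ennreal (g x)}
           \<or> {x\<in>space M. ennreal t < ennreal (g x)} \<subseteq> {x\<in>space M. z < f x}"
    using comonotone_on_superlevel_nested[OF assms(5)] by presburger
qed measurable

lemma distF_RN_deriv_density:
  assumes [measurable]: "h \<in> borel_measurable M"
  shows "distF M (RN_deriv M (density M h)) y = distF M h y"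
  using RN_deriv_unique[OF assms refl] by (intro distF_cong_AE[symmetric]) simp_all

lemma nn_integral_le_vfun_of_distF_eq:
  assumes N: "sigma_finite_measure N" "sets N = sets M" "absolutely_continuous M N"
    and [measurable]: "h \<in> borel_measurable M" "f \<in> borel_measurable M"
    and distF_eq: "\<And>t. t \<ge> 0 \<Longrightarrow> distF M (RN_deriv M N) t = distF M h t"
  shows "(\<integral>\<^sup>+x. ennreal (f x) \<partial>N) \<le> vfun M h f"
proof -
  have "density M (RN_deriv M N) = N"
    using N(3,2) by (rule density_RN_deriv)
  then have "(\<integral>\<^sup>+x. ennreal (f x) \<partial>N) \<le> vfun M (RN_deriv M N) f"
    using nn_integral_density_le_vfun[of "RN_deriv M N" f] N(1) by simp
  also have "\<dots> = vfun M h f"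
    using distF_eq by (rule vfun_cong_distF)
  finally show ?thesis .
qed

end

theorem theorem14:
  fixes M :: "'a measure" and \<mu> :: "'a measure" and g :: "'a \<Rightarrow> real" and f :: "'a \<Rightarrow> real"
  assumes nu_fin: "finite_measure M"
    and Sigma_ne: "chain_classes M \<noteq> {}"
    and mu_fin: "finite_measure \<mu>" and mu_sets: "sets \<mu> = sets M"
    and mu_ac: "absolutely_continuous M \<mu>"
    and g_meas: "g \<in> borel_measurable M" and g_nonneg: "\<forall>x\<in>space M. g x \<ge> 0"
    and g_RN: "\<mu> = density M (\<lambda>x. ennreal (g x))"
    and I_mu: "{{}, space M} \<union> {{x\<in>space M. g x > y} | y. y \<ge> 0} \<in> chain_classes M"
    and image: "{measure M A | A. A \<in> sets M} \<subseteq> {distF M (\<lambda>x. ennreal (g x)) y | y. y \<ge> 0}"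
    and f_meas: "f \<in> borel_measurable M" and f_nonneg: "\<forall>x\<in>space M. f x \<ge> 0"
    and f_com: "comonotone_on (space M) f g"
  shows "vfun M (\<lambda>x. ennreal (g x)) f = (\<integral>\<^sup>+ x. ennreal (f x) \<partial>\<mu>)
       \<and> (\<integral>\<^sup>+ x. ennreal (f x) \<partial>\<mu>) =
         (SUP \<mu>' \<in> {\<mu>'. finite_measure \<mu>' \<and> sets \<mu>' = sets M \<and> absolutely_continuous M \<mu>'
                    \<and> (\<forall>y\<ge>0. distF M (RN_deriv M \<mu>') y = distF M (\<lambda>x. ennreal (g x)) y)}.
            \<integral>\<^sup>+ x. ennreal (f x) \<partial>\<mu>')"
proof -
  interpret finite_measure M by (rule nu_fin)
  let ?G = "\<lambda>x. ennreal (g x)"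
  let ?K = "{\<mu>'. finite_measure \<mu>' \<and> sets \<mu>' = sets M \<and> absolutely_continuous M \<mu>'
                \<and> (\<forall>y\<ge>0. distF M (RN_deriv M \<mu>') y = distF M ?G y)}"
  have G_meas: "?G \<in> borel_measurable M"
    using g_meas by measurable
  have vfun_eq: "(\<integral>\<^sup>+ x. ennreal (f x) \<partial>\<mu>) = vfun M ?G f"
    unfolding g_RN using mu_fin g_meas f_meas g_nonneg f_com
    by (intro nn_integral_density_eq_vfun_comonotone) (auto simp: g_RN intro: finite_measure.axioms(1))
  have "\<mu> \<in> ?K"
    using mu_fin mu_sets mu_ac distF_RN_deriv_density[OF G_meas] by (simp add: g_RN)
  moreover have "(\<integral>\<^sup>+ x. ennreal (f x) \<partial>N) \<le> (\<integral>\<^sup>+ x. ennreal (f x) \<partial>\<mu>)" if "N \<in> ?K" for N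
    unfolding vfun_eq using that G_meas f_meas
    by (intro nn_integral_le_vfun_of_distF_eq) (auto intro: finite_measure.axioms(1))
  ultimately have "(\<integral>\<^sup>+ x. ennreal (f x) \<partial>\<mu>) = (SUP \<mu>' \<in> ?K. \<integral>\<^sup>+ x. ennreal (f x) \<partial>\<mu>')"
    by (intro antisym SUP_upper SUP_least)
  with vfun_eq show ?thesis by simp
qed

end
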